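(* Let $R$ be a commutative ring with identity and $S$ a multiplicatively closed subset of $R$. Let $L=Id(R)$ be the multiplicative lattice of all ideals of $R$, and $S_L=\{(a)\in L\mid a\in S\}$. Then an ideal $Q$ of $R$ is an $S$-primary ideal of $R$ if and only if $Q$, viewed as an element of $L$, is an $S_L$-primary element of $L$.
   Context: A proper ideal $Q$ of $R$ is $S$-primary if $S\cap Q=\varnothing$ and there exists $s\in S$ such that for all $a,b\in R$, $ab\in Q$ implies $sa\in Q$ or $sb\in\sqrt Q$ (the usual radical). In a multiplicative lattice $L$ with set $L_*$ of compact elements, the radical is $\sqrt a=\bigvee\{x\in L_*\mid x^n\le a\text{ for some }n\in\mathbb{Z}^+\}$; for a subset $T$ of compact elements, a proper element $q$ with $t\not\le q$ for all $t\in T$ is $T$-primary if there exists $t\in T$ such that for all $c,d\in L$, $cd\le q$ implies $tc\le q$ or $td\le\sqrt q$. In $Id(R)$ the order is inclusion and the multiplication is the product of ideals. *)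

theory Defs
  imports "HOL-Algebra.Ideal_Product"
begin

definition mult_closed :: "('a, 'b) ring_scheme \<Rightarrow> 'a set \<Rightarrow> bool" where
  "mult_closed R S \<longleftrightarrow> S \<subseteq> carrier R \<and> \<one>\<^bsub>R\<^esub> \<in> S \<and>
     (\<forall>s\<in>S. \<forall>t\<in>S. s \<otimes>\<^bsub>R\<^esub> t \<in> S)"

definition ring_radical :: "('a, 'b) ring_scheme \<Rightarrow> 'a set \<Rightarrow> 'a set" where
  "ring_radical R Q = {a \<in> carrier R. \<exists>n::nat. a [^]\<^bsub>R\<^esub> n \<in> Q}"

definition S_primary_ideal :: "('a, 'b) ring_scheme \<Rightarrow> 'a set \<Rightarrow> 'a set \<Rightarrow> bool" where
  "S_primary_ideal R S Q \<longleftrightarrow> ideal Q R \<and> Q \<noteq> carrier R \<and> S \<inter> Q = {} \<and>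
     (\<exists>s\<in>S. \<forall>a\<in>carrier R. \<forall>b\<in>carrier R.
        a \<otimes>\<^bsub>R\<^esub> b \<in> Q \<longrightarrow> s \<otimes>\<^bsub>R\<^esub> a \<in> Q \<or> s \<otimes>\<^bsub>R\<^esub> b \<in> ring_radical R Q)"

definition ml_compact :: "'l set \<Rightarrow> ('l \<Rightarrow> 'l \<Rightarrow> bool) \<Rightarrow> ('l set \<Rightarrow> 'l) \<Rightarrow> 'l \<Rightarrow> bool" where
  "ml_compact L leq lsup x \<longleftrightarrow> x \<in> L \<and>
     (\<forall>A. A \<subseteq> L \<longrightarrow> leq x (lsup A) \<longrightarrow> (\<exists>B. B \<subseteq> A \<and> finite B \<and> leq x (lsup B)))"

text \<open>Powers x^n for n \<ge> 1 (the value at n = 0 is irrelevant and never used).\<close>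
fun ml_pow :: "('l \<Rightarrow> 'l \<Rightarrow> 'l) \<Rightarrow> 'l \<Rightarrow> nat \<Rightarrow> 'l" where
  "ml_pow lmult x 0 = x"
| "ml_pow lmult x (Suc 0) = x"
| "ml_pow lmult x (Suc (Suc n)) = lmult x (ml_pow lmult x (Suc n))"

definition ml_radical :: "'l set \<Rightarrow> ('l \<Rightarrow> 'l \<Rightarrow> bool) \<Rightarrow> ('l \<Rightarrow> 'l \<Rightarrow> 'l) \<Rightarrow> ('l set \<Rightarrow> 'l) \<Rightarrow> 'l \<Rightarrow> 'l" where
  "ml_radical L leq lmult lsup a =
     lsup {x. ml_compact L leq lsup x \<and> (\<exists>n::nat. n \<ge> 1 \<and> leq (ml_pow lmult x n) a)}"

definition ml_T_primary :: "'l set \<Rightarrow> ('l \<Rightarrow> 'l \<Rightarrow> bool) \<Rightarrow> ('l \<Rightarrow> 'l \<Rightarrow> 'l) \<Rightarrow> ('l set \<Rightarrow> 'l) \<Rightarrow> 'l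
      \<Rightarrow> 'l set \<Rightarrow> 'l \<Rightarrow> bool" where
  "ml_T_primary L leq lmult lsup ltop T q \<longleftrightarrow> q \<in> L \<and> q \<noteq> ltop \<and> (\<forall>t\<in>T. \<not> leq t q) \<and>
     (\<exists>t\<in>T. \<forall>c\<in>L. \<forall>d\<in>L. leq (lmult c d) q \<longrightarrow>
        leq (lmult t c) q \<or> leq (lmult t d) (ml_radical L leq lmult lsup q))"

definition Id_carrier :: "('a, 'b) ring_scheme \<Rightarrow> 'a set set" where
  "Id_carrier R = {I. ideal I R}"

definition Id_Sup :: "('a, 'b) ring_scheme \<Rightarrow> 'a set set \<Rightarrow> 'a set" where
  "Id_Sup R A = Idl\<^bsub>R\<^esub> (\<Union>A)"

definition S_L :: "('a, 'b) ring_scheme \<Rightarrow> 'a set \<Rightarrow> 'a set set" where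
  "S_L R S = {PIdl\<^bsub>R\<^esub> a | a. a \<in> S}"

definition Id_T_primary :: "('a, 'b) ring_scheme \<Rightarrow> 'a set set \<Rightarrow> 'a set \<Rightarrow> bool" where
  "Id_T_primary R T Q =
     ml_T_primary (Id_carrier R) (\<subseteq>) (ideal_prod R) (Id_Sup R) (carrier R) T Q"

end

theory Submission
  imports Defs
begin

text \<open>
  Principal ideals are compact in Id(R), because an element of the ideal generated by a union
  of ideals already lies in the ideal generated by finitely many of them. Hence the lattice
  radical of Q is the ideal generated by the union of the compact x with x^n \<subseteq> Q; this union
  is the ordinary radical (every element of such an x is nilpotent modulo Q, and every a with
  a^k \<in> Q lies in the compact (a) with (a)^(k+1) = (a^(k+1)) \<subseteq> Q), which is itself an ideal.
  Once the radicals agree, the lattice condition for a witness (s) specialises to the ring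
  condition for s by taking C = (a), D = (b); conversely, if (s)C \<subseteq> Q fails, pick c \<in> C with
  sc \<notin> Q, and the ring condition applied to cd \<in> CD \<subseteq> Q gives sd \<in> \<surd>Q for every d \<in> D.
\<close>

context ring
begin

lemma ideal_prod_subset:
  assumes "ideal K R" and "\<And>i j. i \<in> I \<Longrightarrow> j \<in> J \<Longrightarrow> i \<otimes> j \<in> K"
  shows "I \<cdot> J \<subseteq> K"
proof
  fix x assume "x \<in> I \<cdot> J"
  then show "x \<in> K"
    by (induct x rule: ideal_prod.induct)
       (auto simp: assms(2) additive_subgroup.a_closed[OF ideal.axioms(1)[OF assms(1)]])
qed

lemma genideal_of_ideal: "ideal I R \<Longrightarrow> Idl I = I"
  by (simp add: genideal_minimal genideal_self ideal.Icarr subset_antisym subsetI)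

lemma nat_pow_mem_ml_pow:
  assumes "ideal I R" and "y \<in> I"
  shows "y [^] Suc n \<in> ml_pow (ideal_prod R) I (Suc n)"
proof (induct n)
  case 0
  then show ?case using assms by (simp add: ideal.Icarr)
next
  case (Suc n)
  have "y \<in> carrier R" using assms by (rule ideal.Icarr)
  then have "y [^] Suc (Suc n) = y \<otimes> y [^] Suc n" by (rule nat_pow_Suc2)
  then show ?case using Suc assms(2) by (simp add: ideal_prod.prod)
qed

lemma ideal_Union_directed:
  assumes "\<I> \<noteq> {}" and ideals: "\<And>I. I \<in> \<I> \<Longrightarrow> ideal I R"
    and directed: "\<And>I J. I \<in> \<I> \<Longrightarrow> J \<in> \<I> \<Longrightarrow> \<exists>K\<in>\<I>. I \<union> J \<subseteq> K"
  shows "ideal (\<Union>\<I>) R"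
proof (rule idealI[OF ring_axioms])
  show "subgroup (\<Union>\<I>) (add_monoid R)"
  proof (rule subgroup.intro)
    show "\<Union>\<I> \<subseteq> carrier (add_monoid R)"
    proof
      fix x assume "x \<in> \<Union>\<I>"
      then obtain K where "K \<in> \<I>" "x \<in> K" by blast
      then show "x \<in> carrier (add_monoid R)" using ideal.Icarr[OF ideals] by simp
    qed
    show "x \<otimes>\<^bsub>add_monoid R\<^esub> y \<in> \<Union>\<I>" if xy: "x \<in> \<Union>\<I>" "y \<in> \<Union>\<I>" for x y
    proof -
      obtain I J where "I \<in> \<I>" "J \<in> \<I>" "x \<in> I" "y \<in> J" using xy by blast
      then obtain K where K: "K \<in> \<I>" "x \<in> K" "y \<in> K" using directed by blast
      interpret K: ideal K R using ideals K(1) .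
      have "x \<oplus> y \<in> K" using K(2,3) by (rule K.a_closed)
      then show ?thesis using K(1) by auto
    qed
    obtain I where I: "I \<in> \<I>" using assms(1) by blast
    interpret I: ideal I R using ideals I .
    show "\<one>\<^bsub>add_monoid R\<^esub> \<in> \<Union>\<I>" using I by (auto intro!: bexI[of _ I])
    show "inv\<^bsub>add_monoid R\<^esub> x \<in> \<Union>\<I>" if x: "x \<in> \<Union>\<I>" for x
    proof -
      obtain K where K: "K \<in> \<I>" "x \<in> K" using x by blast
      interpret K: ideal K R using ideals K(1) .
      have "\<ominus> x \<in> K" using K(2) by (rule K.a_inv_closed)
      then show ?thesis using K(1) unfolding a_inv_def by auto
    qed
  qed
next
  fix a x assume "a \<in> \<Union>\<I>" and x: "x \<in> carrier R"
  then obtain K where K: "K \<in> \<I>" "a \<in> K" by blast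
  then have "x \<otimes> a \<in> K" "a \<otimes> x \<in> K"
    using x ideal.I_l_closed[OF ideals] ideal.I_r_closed[OF ideals] by auto
  then show "x \<otimes> a \<in> \<Union>\<I>" "a \<otimes> x \<in> \<Union>\<I>" using K(1) by auto
qed

lemma genideal_Union_finite:
  assumes carr: "\<Union>A \<subseteq> carrier R" and x: "x \<in> Idl (\<Union>A)"
  shows "\<exists>B\<subseteq>A. finite B \<and> x \<in> Idl (\<Union>B)"
proof -
  define \<I> where "\<I> = {Idl (\<Union>B) | B. B \<subseteq> A \<and> finite B}"
  have "ideal (\<Union>\<I>) R"
  proof (rule ideal_Union_directed)
    have "Idl (\<Union>{}) \<in> \<I>" unfolding \<I>_def by (intro CollectI exI[of _ "{}"]) simp
    then show "\<I> \<noteq> {}" by blast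
    show "ideal I R" if I: "I \<in> \<I>" for I
    proof -
      obtain B where "B \<subseteq> A" "I = Idl (\<Union>B)" using I unfolding \<I>_def by blast
      moreover have "\<Union>B \<subseteq> carrier R" using \<open>B \<subseteq> A\<close> carr by blast
      ultimately show ?thesis by (simp add: genideal_ideal)
    qed
    show "\<exists>K\<in>\<I>. I \<union> J \<subseteq> K" if IJ: "I \<in> \<I>" "J \<in> \<I>" for I J
    proof -
      obtain B1 B2 where B: "B1 \<subseteq> A" "finite B1" "I = Idl (\<Union>B1)"
        "B2 \<subseteq> A" "finite B2" "J = Idl (\<Union>B2)"
        using IJ unfolding \<I>_def by blast
      have U: "\<Union>(B1 \<union> B2) \<subseteq> carrier R" using B(1,4) carr by blast
      have "I \<subseteq> Idl (\<Union>(B1 \<union> B2))" unfolding B(3) using U by (rule subset_Idl_subset) blast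
      moreover have "J \<subseteq> Idl (\<Union>(B1 \<union> B2))" unfolding B(6) using U by (rule subset_Idl_subset) blast
      moreover have "Idl (\<Union>(B1 \<union> B2)) \<in> \<I>"
        unfolding \<I>_def using B(1,2,4,5) by (intro CollectI exI[of _ "B1 \<union> B2"]) simp
      ultimately show ?thesis by blast
    qed
  qed
  moreover have "\<Union>A \<subseteq> \<Union>\<I>"
  proof
    fix y assume "y \<in> \<Union>A"
    then obtain X where X: "X \<in> A" "y \<in> X" by blast
    have "X \<subseteq> carrier R" using X(1) carr by blast
    then have "y \<in> Idl (\<Union>{X})" using genideal_self X(2) by auto
    moreover have "Idl (\<Union>{X}) \<in> \<I>" using X(1) unfolding \<I>_def by blast
    ultimately show "y \<in> \<Union>\<I>" by blast
  qed
  ultimately have "Idl (\<Union>A) \<subseteq> \<Union>\<I>" by (rule genideal_minimal)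
  then show ?thesis using x unfolding \<I>_def by blast
qed

end

context cring
begin

lemma ideal_prod_cgenideal:
  assumes "a \<in> carrier R" and "b \<in> carrier R"
  shows "(PIdl a) \<cdot> (PIdl b) = PIdl (a \<otimes> b)"
  using assms
  by (simp add: ideal_prod_eq_genideal cgenideal_ideal cgenideal_prod genideal_of_ideal)

lemma cgenideal_prod_subset_iff:
  assumes "ideal I R" and "ideal J R" and s: "s \<in> carrier R"
  shows "(PIdl s) \<cdot> I \<subseteq> J \<longleftrightarrow> (\<forall>i\<in>I. s \<otimes> i \<in> J)"
proof
  assume "(PIdl s) \<cdot> I \<subseteq> J"
  then show "\<forall>i\<in>I. s \<otimes> i \<in> J"
    using s by (blast intro: ideal_prod.prod cgenideal_self)
next
  assume sI: "\<forall>i\<in>I. s \<otimes> i \<in> J"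
  show "(PIdl s) \<cdot> I \<subseteq> J"
  proof (rule ideal_prod_subset[OF assms(2)])
    fix x i assume "x \<in> PIdl s" "i \<in> I"
    then obtain r where "r \<in> carrier R" "x = r \<otimes> s"
      unfolding cgenideal_def by blast
    moreover have "i \<in> carrier R" using assms(1) \<open>i \<in> I\<close> by (rule ideal.Icarr)
    ultimately have "x \<otimes> i = r \<otimes> (s \<otimes> i)" using s by (simp add: m_assoc)
    then show "x \<otimes> i \<in> J"
      using sI \<open>i \<in> I\<close> \<open>r \<in> carrier R\<close> assms(2) by (simp add: ideal.I_l_closed)
  qed
qed

lemma ml_pow_cgenideal:
  assumes "a \<in> carrier R"
  shows "ml_pow (ideal_prod R) (PIdl a) (Suc n) = PIdl (a [^] Suc n)"
proof (induct n)
  case 0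
  then show ?case using assms by simp
next
  case (Suc n)
  then show ?case
    using assms by (simp add: ideal_prod_cgenideal m_ac)
qed

lemma cgenideal_compact:
  assumes a: "a \<in> carrier R"
  shows "ml_compact (Id_carrier R) (\<subseteq>) (Id_Sup R) (PIdl a)"
  unfolding ml_compact_def Id_carrier_def Id_Sup_def
proof (intro conjI allI impI)
  show "PIdl a \<in> {I. ideal I R}" using a by (simp add: cgenideal_ideal)
  fix A assume A: "A \<subseteq> {I. ideal I R}" and "PIdl a \<subseteq> Idl (\<Union>A)"
  then have aA: "a \<in> Idl (\<Union>A)" using cgenideal_self[OF a] by blast
  have carr: "\<Union>A \<subseteq> carrier R"
  proof
    fix x assume "x \<in> \<Union>A"
    then obtain I where "I \<in> A" "x \<in> I" by blast
    then show "x \<in> carrier R" using A ideal.Icarr[of I R x] by blast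
  qed
  obtain B where B: "B \<subseteq> A" "finite B" "a \<in> Idl (\<Union>B)"
    using genideal_Union_finite[OF carr aA] by blast
  have "\<Union>B \<subseteq> carrier R" using B(1) carr by blast
  then have "PIdl a \<subseteq> Idl (\<Union>B)" using B(3) by (simp add: genideal_ideal cgenideal_minimal)
  then show "\<exists>B\<subseteq>A. finite B \<and> PIdl a \<subseteq> Idl (\<Union>B)" using B(1,2) by blast
qed


lemma ideal_colon:
  assumes "ideal Q R" and a: "a \<in> carrier R"
  shows "ideal {x \<in> carrier R. a \<otimes> x \<in> Q} R"
proof -
  interpret Q: ideal Q R by fact
  show ?thesis
  proof (rule idealI[OF ring_axioms])
    show "subgroup {x \<in> carrier R. a \<otimes> x \<in> Q} (add_monoid R)"
      using a by (intro subgroup.intro)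
        (auto simp: r_distr Q.a_closed a_inv_def[symmetric] r_minus Q.a_inv_closed)
  next
    fix b x assume "b \<in> {x \<in> carrier R. a \<otimes> x \<in> Q}" and x: "x \<in> carrier R"
    then have b: "b \<in> carrier R" "a \<otimes> b \<in> Q" by auto
    have "a \<otimes> (x \<otimes> b) = x \<otimes> (a \<otimes> b)" "a \<otimes> (b \<otimes> x) = (a \<otimes> b) \<otimes> x"
      using a b x by (simp_all add: m_lcomm m_assoc)
    then show "x \<otimes> b \<in> {x \<in> carrier R. a \<otimes> x \<in> Q}" "b \<otimes> x \<in> {x \<in> carrier R. a \<otimes> x \<in> Q}"
      using b x by (simp_all add: Q.I_l_closed Q.I_r_closed)
  qed
qed

text \<open>
  This replaces the binomial theorem: induct on m + n, writing
  (a + b)^(m+n) = a (a + b)^(m+n-1) + b (a + b)^(m+n-1) and applying the induction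
  hypothesis to the colon ideals (Q : a) and (Q : b) in place of Q.
\<close>
lemma add_pow_mem_ideal:
  fixes m n :: nat
  assumes "ideal Q R" and a: "a \<in> carrier R" and b: "b \<in> carrier R"
    and "a [^] m \<in> Q" and "b [^] n \<in> Q"
  shows "(a \<oplus> b) [^] (m + n) \<in> Q"
  using assms(1,4,5)
proof (induction "m + n" arbitrary: Q m n rule: less_induct)
  case less
  interpret Q: ideal Q R by fact
  have ab: "a \<oplus> b \<in> carrier R" using a b by simp
  have colon: "c \<otimes> (a \<oplus> b) [^] (i + j) \<in> Q"
    if "c \<in> carrier R" "i + j < m + n" "c \<otimes> a [^] i \<in> Q" "c \<otimes> b [^] j \<in> Q" for c i j
    using less.hyps[of i j "{x \<in> carrier R. c \<otimes> x \<in> Q}"] that a b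
    by (simp add: ideal_colon less.prems(1))
  show ?case
  proof (cases "m = 0 \<or> n = 0")
    case True
    then have "\<one> \<in> Q" using less.prems by auto
    then show ?thesis using Q.one_imp_carrier ab by simp
  next
    case False
    then obtain m' n' where Suc_Suc: "m = Suc m'" "n = Suc n'" by (metis not0_implies_Suc)
    have "a \<otimes> a [^] m' \<in> Q" "b \<otimes> b [^] n' \<in> Q"
      using less.prems Suc_Suc a b by (simp_all add: nat_pow_Suc2[symmetric])
    moreover have "a \<otimes> b [^] n \<in> Q" "b \<otimes> a [^] m \<in> Q"
      using less.prems a b by (simp_all add: Q.I_l_closed)
    moreover have "m + n' = m' + n" using Suc_Suc by simp
    ultimately have "a \<otimes> (a \<oplus> b) [^] (m' + n) \<in> Q" "b \<otimes> (a \<oplus> b) [^] (m' + n) \<in> Q"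
      using colon[of a m' n] colon[of b m n'] a b Suc_Suc by auto
    moreover have "(a \<oplus> b) [^] (m + n) = (a \<oplus> b) \<otimes> (a \<oplus> b) [^] (m' + n)"
      unfolding Suc_Suc add_Suc by (rule nat_pow_Suc2[OF ab])
    ultimately show ?thesis
      using a b by (simp add: l_distr Q.a_closed del: nat_pow_Suc)
  qed
qed

lemma ideal_ring_radical:
  assumes "ideal Q R"
  shows "ideal (ring_radical R Q) R"
proof -
  interpret Q: ideal Q R by fact
  have l_closed: "r \<otimes> a \<in> ring_radical R Q"
    if a: "a \<in> ring_radical R Q" and r: "r \<in> carrier R" for a r
  proof -
    obtain n :: nat where "a \<in> carrier R" "a [^] n \<in> Q"
      using a unfolding ring_radical_def by blast
    then have "(r \<otimes> a) [^] n \<in> Q" using r by (simp add: nat_pow_distrib Q.I_l_closed)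
    then show ?thesis using r \<open>a \<in> carrier R\<close> unfolding ring_radical_def by blast
  qed
  show ?thesis
  proof (rule idealI[OF ring_axioms])
    show "subgroup (ring_radical R Q) (add_monoid R)"
    proof (rule subgroup.intro)
      show "ring_radical R Q \<subseteq> carrier (add_monoid R)" unfolding ring_radical_def by auto
      show "x \<otimes>\<^bsub>add_monoid R\<^esub> y \<in> ring_radical R Q"
        if xy: "x \<in> ring_radical R Q" "y \<in> ring_radical R Q" for x y
      proof -
        obtain m n :: nat where x: "x \<in> carrier R" "x [^] m \<in> Q" and y: "y \<in> carrier R" "y [^] n \<in> Q"
          using xy unfolding ring_radical_def by blast
        have "(x \<oplus> y) [^] (m + n) \<in> Q" using add_pow_mem_ideal[OF assms x(1) y(1) x(2) y(2)] .
        then show ?thesis using x(1) y(1) unfolding ring_radical_def by auto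
      qed
      have "\<zero> \<in> carrier R \<and> \<zero> [^] (1::nat) \<in> Q" by simp
      then have "\<zero> \<in> ring_radical R Q" unfolding ring_radical_def by blast
      then show "\<one>\<^bsub>add_monoid R\<^esub> \<in> ring_radical R Q" by simp
      show "inv\<^bsub>add_monoid R\<^esub> x \<in> ring_radical R Q" if x: "x \<in> ring_radical R Q" for x
      proof -
        have "inv\<^bsub>add_monoid R\<^esub> x = (\<ominus> \<one>) \<otimes> x"
          using x unfolding ring_radical_def by (simp add: a_inv_def[symmetric] l_minus)
        then show ?thesis using l_closed[OF x] by simp
      qed
    qed
  next
    fix a x assume "a \<in> ring_radical R Q" "x \<in> carrier R"
    then show "x \<otimes> a \<in> ring_radical R Q" "a \<otimes> x \<in> ring_radical R Q"
      using l_closed by (auto simp: m_comm ring_radical_def)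
  qed
qed

lemma Id_radical_eq_ring_radical:
  assumes Q: "ideal Q R"
  shows "ml_radical (Id_carrier R) (\<subseteq>) (ideal_prod R) (Id_Sup R) Q = ring_radical R Q"
proof -
  let ?X = "{x. ml_compact (Id_carrier R) (\<subseteq>) (Id_Sup R) x \<and>
                (\<exists>n::nat. n \<ge> 1 \<and> ml_pow (ideal_prod R) x n \<subseteq> Q)}"
  have "\<Union>?X \<subseteq> ring_radical R Q"
  proof
    fix y assume "y \<in> \<Union>?X"
    then obtain x n where y: "y \<in> x" and x: "ml_compact (Id_carrier R) (\<subseteq>) (Id_Sup R) x"
      and n: "n \<ge> 1" "ml_pow (ideal_prod R) x n \<subseteq> Q"
      by blast
    obtain m where m: "n = Suc m" using n(1) by (cases n) auto
    have "ideal x R" using x unfolding ml_compact_def Id_carrier_def by simp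
    then have "y [^] n \<in> Q" "y \<in> carrier R"
      using nat_pow_mem_ml_pow[OF _ y, of m] n(2) ideal.Icarr[OF _ y] unfolding m by auto
    then show "y \<in> ring_radical R Q" unfolding ring_radical_def by blast
  qed
  moreover have "ring_radical R Q \<subseteq> \<Union>?X"
  proof
    fix a assume "a \<in> ring_radical R Q"
    then obtain k :: nat where a: "a \<in> carrier R" and "a [^] k \<in> Q"
      unfolding ring_radical_def by blast
    then have "a [^] Suc k \<in> Q" by (simp add: ideal.I_r_closed[OF Q])
    then have "ml_pow (ideal_prod R) (PIdl a) (Suc k) \<subseteq> Q"
      using a by (simp add: ml_pow_cgenideal cgenideal_minimal[OF Q])
    then have "PIdl a \<in> ?X" using cgenideal_compact[OF a] by (intro CollectI conjI exI[of _ "Suc k"]) auto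
    then show "a \<in> \<Union>?X" using cgenideal_self[OF a] by blast
  qed
  ultimately show ?thesis
    unfolding ml_radical_def Id_Sup_def
    using genideal_of_ideal ideal_ring_radical[OF Q] by (simp add: subset_antisym)
qed

lemma S_L_not_below_iff_disjoint:
  assumes "S \<subseteq> carrier R" and "ideal Q R"
  shows "(\<forall>t\<in>S_L R S. \<not> t \<subseteq> Q) \<longleftrightarrow> S \<inter> Q = {}"
proof
  assume below: "\<forall>t\<in>S_L R S. \<not> t \<subseteq> Q"
  show "S \<inter> Q = {}"
  proof (rule ccontr)
    assume "S \<inter> Q \<noteq> {}"
    then obtain s where "s \<in> S" "s \<in> Q" by blast
    then have "PIdl s \<in> S_L R S" "PIdl s \<subseteq> Q"
      using cgenideal_minimal[OF assms(2)] unfolding S_L_def by auto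
    then show False using below by blast
  qed
next
  assume disjoint: "S \<inter> Q = {}"
  show "\<forall>t\<in>S_L R S. \<not> t \<subseteq> Q"
  proof
    fix t assume "t \<in> S_L R S"
    then obtain s where "s \<in> S" "t = PIdl s" unfolding S_L_def by blast
    then have "s \<in> t" "s \<notin> Q" using assms(1) cgenideal_self disjoint by auto
    then show "\<not> t \<subseteq> Q" by blast
  qed
qed

lemma principal_witness_ideals_iff_elements:
  assumes Q: "ideal Q R" and s: "s \<in> carrier R"
  shows "(\<forall>C\<in>Id_carrier R. \<forall>D\<in>Id_carrier R. C \<cdot> D \<subseteq> Q \<longrightarrow>
            (PIdl s) \<cdot> C \<subseteq> Q \<or> (PIdl s) \<cdot> D \<subseteq> ring_radical R Q) \<longleftrightarrow>
         (\<forall>a\<in>carrier R. \<forall>b\<in>carrier R. a \<otimes> b \<in> Q \<longrightarrow>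
            s \<otimes> a \<in> Q \<or> s \<otimes> b \<in> ring_radical R Q)"
    (is "?ideals \<longleftrightarrow> ?elements")
proof
  assume ideals: ?ideals
  show ?elements
  proof (intro ballI impI)
    fix a b assume a: "a \<in> carrier R" and b: "b \<in> carrier R" and "a \<otimes> b \<in> Q"
    then have "(PIdl a) \<cdot> (PIdl b) \<subseteq> Q"
      by (simp add: ideal_prod_cgenideal cgenideal_minimal[OF Q])
    then have "(PIdl s) \<cdot> (PIdl a) \<subseteq> Q \<or> (PIdl s) \<cdot> (PIdl b) \<subseteq> ring_radical R Q"
      using ideals a b by (simp add: Id_carrier_def cgenideal_ideal)
    moreover have "s \<otimes> a \<in> (PIdl s) \<cdot> (PIdl a)" "s \<otimes> b \<in> (PIdl s) \<cdot> (PIdl b)"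
      using s a b by (simp_all add: cgenideal_self ideal_prod.prod)
    ultimately show "s \<otimes> a \<in> Q \<or> s \<otimes> b \<in> ring_radical R Q" by blast
  qed
next
  assume elements: ?elements
  show ?ideals
  proof (intro ballI impI)
    fix C D assume "C \<in> Id_carrier R" "D \<in> Id_carrier R" and CD: "C \<cdot> D \<subseteq> Q"
    then have C: "ideal C R" and D: "ideal D R" unfolding Id_carrier_def by auto
    show "(PIdl s) \<cdot> C \<subseteq> Q \<or> (PIdl s) \<cdot> D \<subseteq> ring_radical R Q"
    proof (cases "\<forall>c\<in>C. s \<otimes> c \<in> Q")
      case True
      then show ?thesis using cgenideal_prod_subset_iff[OF C Q s] by blast
    next
      case False
      then obtain c where c: "c \<in> C" "s \<otimes> c \<notin> Q" by blast
      have "s \<otimes> d \<in> ring_radical R Q" if "d \<in> D" for d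
        using elements ideal_prod.prod[OF c(1) that] CD c ideal.Icarr[OF C] ideal.Icarr[OF D that]
        by blast
      then show ?thesis
        using cgenideal_prod_subset_iff[OF D ideal_ring_radical[OF Q] s] by blast
    qed
  qed
qed

lemma S_L_witness_iff:
  assumes S: "S \<subseteq> carrier R" and Q: "ideal Q R"
  shows "(\<exists>t\<in>S_L R S. \<forall>C\<in>Id_carrier R. \<forall>D\<in>Id_carrier R. C \<cdot> D \<subseteq> Q \<longrightarrow>
            t \<cdot> C \<subseteq> Q \<or> t \<cdot> D \<subseteq> ring_radical R Q) \<longleftrightarrow>
         (\<exists>s\<in>S. \<forall>a\<in>carrier R. \<forall>b\<in>carrier R. a \<otimes> b \<in> Q \<longrightarrow>
            s \<otimes> a \<in> Q \<or> s \<otimes> b \<in> ring_radical R Q)"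
    (is "(\<exists>t\<in>_. ?ideals t) \<longleftrightarrow> (\<exists>s\<in>_. ?elements s)")
proof -
  have "(\<exists>t\<in>S_L R S. ?ideals t) \<longleftrightarrow> (\<exists>s\<in>S. ?ideals (PIdl s))"
    unfolding S_L_def by blast
  also have "\<dots> \<longleftrightarrow> (\<exists>s\<in>S. ?elements s)"
    using S by (intro bex_cong refl principal_witness_ideals_iff_elements[OF Q]) blast
  finally show ?thesis .
qed

end

theorem mainTheorem5:
  fixes R :: "('a, 'b) ring_scheme" and S Q :: "'a set"
  assumes "cring R"
    and "mult_closed R S"
    and "ideal Q R"
  shows "S_primary_ideal R S Q \<longleftrightarrow> Id_T_primary R (S_L R S) Q"
proof -
  interpret cring R by fact
  have S: "S \<subseteq> carrier R" using assms(2) unfolding mult_closed_def by blast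
  show ?thesis
    unfolding S_primary_ideal_def Id_T_primary_def ml_T_primary_def
      Id_radical_eq_ring_radical[OF assms(3)] S_L_not_below_iff_disjoint[OF S assms(3)]
      S_L_witness_iff[OF S assms(3)]
    using assms(3) by (simp add: Id_carrier_def)
qed

end
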